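(* For any separable metric space $(\mathcal{X},\rho)$ (with its Borel $\sigma$-algebra $\mathcal{B}$), $\mathrm{FMV}=\mathrm{FS}$. That is, a stochastic process $\mathbb{X}$ on $\mathcal{X}$ takes only finitely many distinct values almost surely if and only if for every countable measurable partition $\{A_k\}_{k\ge1}$ of $\mathcal{X}$, almost surely $\mathbb{X}$ visits only finitely many of the sets $A_k$.
   Context: $\mathrm{FS}$: the set of processes $\mathbb{X}=(X_t)_{t\ge1}$ with $\#\{x\in\mathcal{X}:\exists t,\ X_t=x\}<\infty$ a.s. $\mathrm{FMV}$: the set of processes $\mathbb{X}$ such that for every sequence of pairwise disjoint sets $\{A_k\}_{k\ge1}\subset\mathcal{B}$ with $\bigcup_kA_k=\mathcal{X}$, $\#\{k\in\mathbb{N}: \exists t,\ X_t\in A_k\}<\infty$ almost surely. *)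

theory Defs
  imports "HOL-Probability.Probability"
begin

text \<open>A process is a sequence X t (t \<ge> 1) of random elements X t : M \<rightarrow> 'a,
  where 'a carries its Borel sigma-algebra.\<close>

definition FS :: "'b measure \<Rightarrow> (nat \<Rightarrow> 'b \<Rightarrow> 'a::topological_space) \<Rightarrow> bool" where
  "FS M X \<longleftrightarrow> (AE \<omega> in M. finite {x. \<exists>t\<ge>1. X t \<omega> = x})"

definition FMV :: "'b measure \<Rightarrow> (nat \<Rightarrow> 'b \<Rightarrow> 'a::topological_space) \<Rightarrow> bool" where
  "FMV M X \<longleftrightarrow>
     (\<forall>A :: nat \<Rightarrow> 'a set.
        (\<forall>k\<ge>1. A k \<in> sets borel) \<and> disjoint_family_on A {1..} \<and> (\<Union>k\<in>{1..}. A k) = UNIV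
        \<longrightarrow> (AE \<omega> in M. finite {k. k \<ge> 1 \<and> (\<exists>t\<ge>1. X t \<omega> \<in> A k)}))"

end

(*
  FS implies FMV because each value lies in exactly one set of a partition.  Conversely, assume FMV
  and suppose that the set of values is infinite with probability p > 0.  A dense sequence yields,
  for every level n, a countable Borel partition into cells of diameter < 2/(n+1).  By FMV only
  finitely many cells of a level are visited; on the event of infinitely many values in a Borel set B
  one of them holds infinitely many values while, for n large, many others are visited as well.
  Selecting every cell independently with small probability therefore gives, for most such outcomes,
  a set A of cells that the process visits but that misses infinitely many values of B; averaging
  over the selection fixes one Borel A \<subseteq> B that works with probability close to that of
  B containing infinitely many values.  Peeling off such sets A_k with error budgets p/2^(k+2)
  produces disjoint Borel sets each visited with probability \<ge> p/2, hence infinitely many of them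
  are visited with probability \<ge> p/2, contradicting FMV for the partition formed by the A_k and
  the complement of their union.
*)

theory Submission
  imports Defs
begin

definition process_values :: "(nat \<Rightarrow> 'b \<Rightarrow> 'a) \<Rightarrow> 'b \<Rightarrow> 'a set" where
  "process_values X \<omega> = {x. \<exists>t\<ge>1. X t \<omega> = x}"

definition visits :: "(nat \<Rightarrow> 'b \<Rightarrow> 'a) \<Rightarrow> 'a set \<Rightarrow> 'b \<Rightarrow> bool" where
  "visits X A \<omega> \<longleftrightarrow> (\<exists>t\<ge>1. X t \<omega> \<in> A)"

lemma finite_visited_members_of_disjoint_family:
  assumes disj: "disjoint_family_on A I" and fin: "finite (process_values X \<omega>)"
  shows "finite {k\<in>I. visits X (A k) \<omega>}"
proof -
  have "finite {k\<in>I. x \<in> A k}" for x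
  proof -
    have "{k\<in>I. x \<in> A k} \<subseteq> {k}" if "k \<in> I" "x \<in> A k" for k
      using disj that by (auto simp: disjoint_family_on_def)
    then show ?thesis
      by (cases "{k\<in>I. x \<in> A k} = {}") (auto intro: finite_subset)
  qed
  then have "finite (\<Union>x\<in>process_values X \<omega>. {k\<in>I. x \<in> A k})"
    using fin by blast
  moreover have "{k\<in>I. visits X (A k) \<omega>} \<subseteq> (\<Union>x\<in>process_values X \<omega>. {k\<in>I. x \<in> A k})"
    by (auto simp: visits_def process_values_def)
  ultimately show ?thesis using finite_subset by blast
qed

lemma FS_imp_FMV:
  fixes X :: "nat \<Rightarrow> 'b \<Rightarrow> 'a::topological_space"
  shows "FS M X \<Longrightarrow> FMV M X"
  unfolding FMV_def FS_def
proof (intro allI impI)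
  fix A :: "nat \<Rightarrow> 'a set"
  assume "(\<forall>k\<ge>1. A k \<in> sets borel) \<and> disjoint_family_on A {1..} \<and> (\<Union>k\<in>{1..}. A k) = UNIV"
  then have "disjoint_family_on A {1..}" by blast
  then have "finite {k\<in>{1..}. visits X (A k) \<omega>}" if "finite (process_values X \<omega>)" for \<omega>
    using that by (rule finite_visited_members_of_disjoint_family)
  moreover have "{k. k \<ge> 1 \<and> (\<exists>t\<ge>1. X t \<omega> \<in> A k)} = {k\<in>{1..}. visits X (A k) \<omega>}" for \<omega>
    by (auto simp: visits_def)
  moreover assume "AE \<omega> in M. finite {x. \<exists>t\<ge>1. X t \<omega> = x}"
  ultimately show "AE \<omega> in M. finite {k. k \<ge> 1 \<and> (\<exists>t\<ge>1. X t \<omega> \<in> A k)}"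
    unfolding process_values_def by (auto elim: eventually_mono)
qed

lemma AE_finite_visits_if_FMV:
  fixes A :: "nat \<Rightarrow> 'a::topological_space set"
  assumes fmv: "FMV M X" and A: "\<And>k. A k \<in> sets borel" and disj: "disjoint_family A"
  shows "AE \<omega> in M. finite {k. visits X (A k) \<omega>}"
proof -
  \<comment> \<open>index 1 carries the complement of the union, index k + 2 carries A k; P 0 is never used\<close>
  define P where "P k = (if k = 1 then - (\<Union>j. A j) else A (k - 2))" for k
  have partition: "(\<forall>k\<ge>1. P k \<in> sets borel) \<and> disjoint_family_on P {1..} \<and> (\<Union>k\<in>{1..}. P k) = UNIV"
  proof (intro conjI)
    show "\<forall>k\<ge>1. P k \<in> sets borel" using A by (auto simp: P_def)
    show "disjoint_family_on P {1..}"
      unfolding disjoint_family_on_def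
    proof (intro ballI impI)
      fix m n :: nat assume mn: "m \<in> {1..}" "n \<in> {1..}" "m \<noteq> n"
      show "P m \<inter> P n = {}"
      proof (cases "m = 1 \<or> n = 1")
        case True
        then show ?thesis using mn by (auto simp: P_def)
      next
        case False
        then have "m - 2 \<noteq> n - 2" using mn by auto
        then show ?thesis using False disj by (simp add: P_def disjoint_family_on_def)
      qed
    qed
    have "x \<in> (\<Union>k\<in>{1..}. P k)" for x
    proof (cases "x \<in> P 1")
      case False
      then obtain j where "x \<in> P (j + 2)" by (auto simp: P_def)
      then show ?thesis by (intro UN_I[of "j + 2"]) auto
    qed auto
    then show "(\<Union>k\<in>{1..}. P k) = UNIV" by blast
  qed
  from fmv[unfolded FMV_def, rule_format, OF partition] show ?thesis
  proof (rule eventually_mono)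
    fix \<omega> assume "finite {k. k \<ge> 1 \<and> (\<exists>t\<ge>1. X t \<omega> \<in> P k)}"
    moreover have "(\<lambda>k. k + 2) ` {k. visits X (A k) \<omega>} \<subseteq> {k. k \<ge> 1 \<and> (\<exists>t\<ge>1. X t \<omega> \<in> P k)}"
      by (auto simp: visits_def P_def)
    ultimately have "finite ((\<lambda>k::nat. k + 2) ` {k. visits X (A k) \<omega>})"
      by (rule finite_subset[rotated])
    then show "finite {k. visits X (A k) \<omega>}"
      by (rule finite_imageD) (simp add: inj_on_def)
  qed
qed

lemma (in prob_space) nonpos_if_AE_finitely_often:
  fixes E :: "nat \<Rightarrow> 'a set"
  assumes E: "\<And>k. E k \<in> events" and c: "\<And>k. c \<le> prob (E k)"
    and fin: "AE \<omega> in M. finite {k. \<omega> \<in> E k}"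
  shows "c \<le> 0"
proof -
  define U where "U n = (\<Union>k\<in>{n..}. E k)" for n
  have U: "U n \<in> events" for n using E by (auto simp: U_def)
  have "decseq U" by (force simp: decseq_def U_def)
  then have "(\<lambda>n. prob (U n)) \<longlonglongrightarrow> prob (\<Inter>n. U n)"
    using U by (intro finite_Lim_measure_decseq) auto
  moreover have "c \<le> prob (U n)" for n
    using c[of n] finite_measure_mono[of "E n" "U n"] U by (force simp: U_def)
  ultimately have "c \<le> prob (\<Inter>n. U n)" by (intro LIMSEQ_le_const) auto
  also have "prob (\<Inter>n. U n) = 0"
  proof -
    have "\<omega> \<notin> (\<Inter>n. U n)" if fin\<omega>: "finite {k. \<omega> \<in> E k}" for \<omega>
    proof -
      obtain m where "\<forall>k. \<omega> \<in> E k \<longrightarrow> k \<le> m"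
        using fin\<omega> finite_nat_set_iff_bounded_le[of "{k. \<omega> \<in> E k}"] by blast
      then show ?thesis by (auto simp: U_def intro!: exI[of _ "Suc m"])
    qed
    then have "AE \<omega> in M. \<omega> \<notin> (\<Inter>n. U n)" using fin by (auto elim: eventually_mono)
    moreover have V: "(\<Inter>n. U n) \<in> events" using U by auto
    moreover have "{\<omega>\<in>space M. \<omega> \<in> (\<Inter>n. U n)} = (\<Inter>n. U n)"
      using sets.sets_into_space[OF V] by blast
    ultimately show ?thesis
      using prob_Collect_eq_0[of "\<lambda>\<omega>. \<omega> \<in> (\<Inter>n. U n)"] by simp
  qed
  finally show ?thesis .
qed

lemma prob_bernoulli_selection_avoids_and_meets:
  fixes \<alpha> :: real and L :: nat
  assumes \<alpha>: "0 \<le> \<alpha>" "\<alpha> \<le> 1" and i0: "i0 < L" and K: "K \<subseteq> {..<L}"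
  shows "1 - \<alpha> - (1 - \<alpha>) ^ card K
    \<le> measure_pmf.prob (Pi_pmf {..<L} False (\<lambda>_. bernoulli_pmf \<alpha>)) {b. \<not> b i0 \<and> (\<exists>i\<in>K. b i)}"
proof -
  let ?\<nu> = "Pi_pmf {..<L} False (\<lambda>_. bernoulli_pmf \<alpha>)"
  have prob_Pi: "measure_pmf.prob ?\<nu> (Pi {..<L} S) = (\<Prod>i<L. measure_pmf.prob (bernoulli_pmf \<alpha>) (S i))" for S
    by (rule measure_Pi_pmf_Pi) simp
  have "{b. b i0} = Pi {..<L} (\<lambda>i. if i = i0 then {True} else UNIV)"
    using i0 by (auto simp: Pi_def)
  then have chosen: "measure_pmf.prob ?\<nu> {b. b i0} = \<alpha>"
    using i0 \<alpha> by (simp add: prob_Pi measure_pmf_single if_distrib prod.If_cases Int_absorb1)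
  have "{b. \<forall>i\<in>K. \<not> b i} = Pi {..<L} (\<lambda>i. if i \<in> K then {False} else UNIV)"
    using K by (auto simp: Pi_def)
  then have none: "measure_pmf.prob ?\<nu> {b. \<forall>i\<in>K. \<not> b i} = (1 - \<alpha>) ^ card K"
    using K \<alpha> by (simp add: prob_Pi measure_pmf_single if_distrib prod.If_cases Int_absorb1)
  have "- {b. \<not> b i0 \<and> (\<exists>i\<in>K. b i)} = {b. b i0} \<union> {b. \<forall>i\<in>K. \<not> b i}" by auto
  then have "1 - measure_pmf.prob ?\<nu> {b. \<not> b i0 \<and> (\<exists>i\<in>K. b i)} \<le> \<alpha> + (1 - \<alpha>) ^ card K"
    using measure_pmf.prob_compl[of "{b. \<not> b i0 \<and> (\<exists>i\<in>K. b i)}" ?\<nu>]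
      measure_Un_le[of "{b. b i0}" ?\<nu> "{b. \<forall>i\<in>K. \<not> b i}"] chosen none
    by (simp add: Compl_eq_Diff_UNIV)
  then show ?thesis by simp
qed

lemma (in prob_space) exists_good_choice_by_averaging:
  assumes fin: "finite (set_pmf \<nu>)" and E: "\<And>b. E b \<in> events" and G: "G \<in> events"
    and good: "\<And>\<omega>. \<omega> \<in> G \<Longrightarrow> c \<le> measure_pmf.prob \<nu> {b. \<omega> \<in> E b}"
  shows "\<exists>b. c * prob G \<le> prob (E b)"
proof (rule ccontr)
  assume "\<not> ?thesis"
  then have bad: "prob (E b) < c * prob G" for b by (simp add: not_le)
  define f where "f \<omega> = (\<Sum>b\<in>set_pmf \<nu>. pmf \<nu> b * indicator (E b) \<omega>)" for \<omega>
  have f_eq: "measure_pmf.prob \<nu> {b. \<omega> \<in> E b} = f \<omega>" for \<omega>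
  proof -
    have "measure_pmf.prob \<nu> {b. \<omega> \<in> E b} = measure_pmf.prob \<nu> (set_pmf \<nu> \<inter> {b. \<omega> \<in> E b})"
      using measure_Int_set_pmf[of \<nu> "{b. \<omega> \<in> E b}"] by (simp add: Int_commute)
    also have "\<dots> = sum (pmf \<nu>) (set_pmf \<nu> \<inter> {b. \<omega> \<in> E b})"
      using fin by (intro measure_measure_pmf_finite) auto
    also have "\<dots> = f \<omega>"
      unfolding f_def using fin by (simp add: sum.inter_restrict indicator_def if_distrib cong: if_cong)
    finally show ?thesis .
  qed
  have integrable_ind: "integrable M (indicator A :: 'a \<Rightarrow> real)" if "A \<in> events" for A
    using that by (simp add: emeasure_eq_measure)
  have "c * prob G = integral\<^sup>L M (\<lambda>\<omega>. c * indicator G \<omega>)"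
    using G by simp
  also have "\<dots> \<le> integral\<^sup>L M f"
  proof (rule integral_mono)
    show "integrable M f"
      unfolding f_def by (intro Bochner_Integration.integrable_sum integrable_mult_right integrable_ind E)
    show "c * indicator G \<omega> \<le> f \<omega>" for \<omega>
      using good[of \<omega>] f_eq[of \<omega>] unfolding f_def by (cases "\<omega> \<in> G") (auto intro: sum_nonneg)
  qed (intro integrable_mult_right integrable_ind G)
  also have "integral\<^sup>L M f = (\<Sum>b\<in>set_pmf \<nu>. pmf \<nu> b * prob (E b))"
    unfolding f_def using E by (subst Bochner_Integration.integral_sum) (auto intro: integrable_ind)
  also have "\<dots> < (\<Sum>b\<in>set_pmf \<nu>. pmf \<nu> b * (c * prob G))"
    using fin bad by (intro sum_strict_mono) (auto simp: set_pmf_not_empty pmf_positive)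
  also have "\<dots> = c * prob G"
    using sum_pmf_eq_1[OF fin order_refl] by (simp add: sum_distrib_right[symmetric])
  finally show False by simp
qed

lemma (in prob_space) exists_prob_gt_of_incseq:
  assumes S: "\<And>n. S n \<in> events" and "incseq S" and c: "c < prob (\<Union>n. S n)"
  shows "\<exists>n. c < prob (S n)"
proof -
  have "(\<lambda>n. prob (S n)) \<longlonglongrightarrow> prob (\<Union>n. S n)"
    using S \<open>incseq S\<close> by (intro finite_Lim_measure_incseq) auto
  from order_tendstoD(1)[OF this c] show ?thesis by (auto simp: eventually_sequentially)
qed

lemma finite_set_Pi_pmf_bool:
  "finite (set_pmf (Pi_pmf {..<L::nat} False (\<lambda>_. p :: bool pmf)))"
proof -
  have "set_pmf (Pi_pmf {..<L} False (\<lambda>_. p)) \<subseteq> PiE_dflt {..<L} False (set_pmf \<circ> (\<lambda>_. p))"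
    by (rule set_Pi_pmf_subset') simp
  moreover have "finite (PiE_dflt {..<L} False (set_pmf \<circ> (\<lambda>_. p)))"
    by (intro finite_PiE_dflt) auto
  ultimately show ?thesis by (rule finite_subset)
qed

lemma diff_double_le_mult_diff:
  fixes p d :: real
  assumes "0 \<le> d" "p \<le> 1"
  shows "p - 2 * d \<le> (1 - d) * (p - d)"
proof -
  have "(1 - d) * (p - d) = p - 2 * d + (d * (1 - p) + d * d)"
    by (simp add: algebra_simps)
  moreover have "0 \<le> d * (1 - p) + d * d"
    using assms by simp
  ultimately show ?thesis by linarith
qed

lemma (in prob_space) prob_Int_ge:
  assumes "A \<in> events" "B \<in> events"
  shows "prob A + prob B - 1 \<le> prob (A \<inter> B)"
proof -
  have "prob A \<le> prob ((A \<inter> B) \<union> (space M - B))"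
    using assms by (intro finite_measure_mono) (auto dest: sets.sets_into_space)
  also have "\<dots> \<le> prob (A \<inter> B) + (1 - prob B)"
    using assms measure_Un_le[of "A \<inter> B" M "space M - B"] prob_compl[of B] by simp
  finally show ?thesis by simp
qed

lemma disjoint_family_of_successive_removals:
  fixes A R :: "nat \<Rightarrow> 'a set"
  assumes sub: "\<And>k. A k \<subseteq> R k" and remove: "\<And>k. R (Suc k) = R k - A k"
  shows "disjoint_family A"
proof -
  have "decseq R" using remove by (intro decseq_SucI) auto
  have disj: "A j \<inter> A k = {}" if "j < k" for j k
  proof -
    have "R k \<subseteq> R (Suc j)" using \<open>decseq R\<close> that by (simp add: decseq_def)
    then show ?thesis using sub[of k] remove[of j] by blast
  qed
  have "A j \<inter> A k = {}" if "j \<noteq> k" for j k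
    using disj[of j k] disj[of k j] that by (cases "j < k") (auto simp: Int_commute)
  then show ?thesis by (simp add: disjoint_family_on_def)
qed

lemma peeling_sequence:
  fixes S :: "'a set"
  assumes Q0: "Q S" and step: "\<And>k R. Q R \<Longrightarrow> \<exists>A. A \<subseteq> R \<and> Q (R - A) \<and> P k R A"
  obtains R A :: "nat \<Rightarrow> 'a set"
  where "R 0 = S" "\<And>k. R (Suc k) = R k - A k" "\<And>k. Q (R k)" "\<And>k. A k \<subseteq> R k"
    "\<And>k. P k (R k) (A k)"
proof -
  define pick where "pick k R = (SOME A. A \<subseteq> R \<and> Q (R - A) \<and> P k R A)" for k R
  have pick: "pick k R \<subseteq> R \<and> Q (R - pick k R) \<and> P k R (pick k R)" if "Q R" for k R
    unfolding pick_def using step[OF that] by (rule someI_ex)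
  define R where "R = rec_nat S (\<lambda>k R. R - pick k R)"
  have R_simps: "R 0 = S" "R (Suc k) = R k - pick k (R k)" for k
    by (simp_all add: R_def)
  have Q: "Q (R k)" for k
    by (induction k) (use Q0 pick in \<open>auto simp: R_simps\<close>)
  show ?thesis
    by (rule that[of R "\<lambda>k. pick k (R k)"]) (use R_simps Q pick in auto)
qed

locale dense_sequence =
  fixes q :: "nat \<Rightarrow> 'a::metric_space"
  assumes dense: "0 < e \<Longrightarrow> \<exists>i. dist x (q i) < e"
begin

definition cell_index :: "nat \<Rightarrow> 'a \<Rightarrow> nat" where
  "cell_index n x = (LEAST i. dist x (q i) < 1 / real (Suc n))"

lemma dist_cell_center: "dist x (q (cell_index n x)) < 1 / real (Suc n)"
  unfolding cell_index_def by (rule LeastI_ex) (rule dense, simp)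

lemma cell_index_eq_iff:
  "cell_index n x = i \<longleftrightarrow> dist x (q i) < 1 / real (Suc n) \<and> (\<forall>j<i. 1 / real (Suc n) \<le> dist x (q j))"
proof
  assume "cell_index n x = i"
  then show "dist x (q i) < 1 / real (Suc n) \<and> (\<forall>j<i. 1 / real (Suc n) \<le> dist x (q j))"
    using dist_cell_center[of x n] not_less_Least unfolding cell_index_def not_less[symmetric] by blast
next
  assume "dist x (q i) < 1 / real (Suc n) \<and> (\<forall>j<i. 1 / real (Suc n) \<le> dist x (q j))"
  then show "cell_index n x = i"
    unfolding cell_index_def by (intro Least_equality) (auto simp: not_less[symmetric])
qed

lemma dist_less_if_same_cell:
  assumes "cell_index n x = cell_index n y"
  shows "dist x y < 2 / real (Suc n)"
proof -
  have "dist x y \<le> dist x (q (cell_index n x)) + dist y (q (cell_index n x))"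
    by (rule dist_triangle2)
  also have "\<dots> < 1 / real (Suc n) + 1 / real (Suc n)"
    using dist_cell_center[of x n] dist_cell_center[of y n] assms by simp
  finally show ?thesis by simp
qed

lemma vimage_cell_index_borel: "cell_index n -` I \<in> sets borel"
proof -
  let ?r = "1 / real (Suc n)"
  have cell: "cell_index n -` {i} = {x. dist x (q i) < ?r} \<inter> (\<Inter>j<i. {x. ?r \<le> dist x (q j)})" for i
    by (rule set_eqI) (simp only: vimage_singleton_eq cell_index_eq_iff, auto)
  have "open {x. dist x (q i) < ?r}" for i
    by (intro open_Collect_less continuous_intros)
  moreover have "closed (\<Inter>j<i. {x. ?r \<le> dist x (q j)})" for i
    by (intro closed_INT ballI closed_Collect_le continuous_intros)
  ultimately have "cell_index n -` {i} \<in> sets borel" for i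
    unfolding cell by (intro sets.Int borel_open borel_closed)
  then have "cell_index n \<in> borel \<rightarrow>\<^sub>M count_space UNIV"
    by (simp add: measurable_count_space_eq2_countable)
  from measurable_sets[OF this, of I] show ?thesis by simp
qed

lemma eventually_inj_on_cell_index:
  assumes "finite F"
  shows "eventually (\<lambda>n. inj_on (cell_index n) F) sequentially"
proof -
  have lim: "(\<lambda>n. 2 * inverse (real (Suc n))) \<longlonglongrightarrow> 0"
    by (intro tendsto_mult_right_zero LIMSEQ_inverse_real_of_nat)
  have "eventually (\<lambda>n. x \<noteq> y \<longrightarrow> 2 / real (Suc n) < dist x y) sequentially" for x y :: 'a
  proof (cases "x = y")
    case False
    then have "eventually (\<lambda>n. 2 * inverse (real (Suc n)) < dist x y) sequentially"
      by (intro order_tendstoD(2)[OF lim]) simp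
    then show ?thesis by (rule eventually_mono) (simp add: divide_inverse)
  qed simp
  then have "eventually (\<lambda>n. \<forall>x\<in>F. \<forall>y\<in>F. x \<noteq> y \<longrightarrow> 2 / real (Suc n) < dist x y) sequentially"
    using assms by (intro eventually_ball_finite ballI) auto
  then show ?thesis
  proof (rule eventually_mono)
    fix n assume far: "\<forall>x\<in>F. \<forall>y\<in>F. x \<noteq> y \<longrightarrow> 2 / real (Suc n) < dist x y"
    show "inj_on (cell_index n) F"
    proof (rule inj_onI, rule ccontr)
      fix x y assume "x \<in> F" "y \<in> F" "cell_index n x = cell_index n y" "x \<noteq> y"
      with far dist_less_if_same_cell[of n x y] show False by fastforce
    qed
  qed
qed

end

lemma obtain_dense_sequence:
  assumes "separable_space (euclidean :: 'a::metric_space topology)"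
  obtains q :: "nat \<Rightarrow> 'a::metric_space" where "dense_sequence q"
proof -
  obtain C :: "'a set" where C: "countable C" "closure C = UNIV"
    using assms by (auto simp: separable_space_def)
  have "\<exists>i. dist x (from_nat_into C i) < e" if e: "0 < e" for x :: 'a and e :: real
  proof -
    obtain y where "y \<in> C" "dist y x < e"
      using C(2) closure_approachable[of x C] e by auto
    then show ?thesis
      using from_nat_into_surj[OF C(1)] by (metis dist_commute)
  qed
  then show ?thesis by (intro that[of "from_nat_into C"] dense_sequence.intro) blast
qed

locale separable_process = prob_space M + dense_sequence q
  for M :: "'b measure" and q :: "nat \<Rightarrow> 'a::metric_space" +
  fixes X :: "nat \<Rightarrow> 'b \<Rightarrow> 'a"
  assumes measurable_X: "t \<ge> 1 \<Longrightarrow> X t \<in> borel_measurable M"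
begin

lemma visits_events: "A \<in> sets borel \<Longrightarrow> {\<omega>\<in>space M. visits X A \<omega>} \<in> events"
proof -
  assume A: "A \<in> sets borel"
  have "{\<omega>\<in>space M. visits X A \<omega>} = (\<Union>t\<in>{1..}. X t -` A \<inter> space M)"
    by (auto simp: visits_def)
  also have "\<dots> \<in> events"
    using A measurable_X by (intro sets.countable_UN') (auto intro: measurable_sets)
  finally show ?thesis .
qed

definition visits_cells :: "nat \<Rightarrow> 'a set \<Rightarrow> nat \<Rightarrow> 'b \<Rightarrow> bool" where
  "visits_cells n B m \<omega> \<longleftrightarrow>
     (\<exists>K. finite K \<and> card K = m \<and> (\<forall>i\<in>K. visits X (B \<inter> cell_index n -` {i}) \<omega>))"

lemma visits_cells_events:
  assumes "B \<in> sets borel"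
  shows "{\<omega>\<in>space M. visits_cells n B m \<omega>} \<in> events"
proof -
  have "{\<omega>\<in>space M. visits_cells n B m \<omega>} =
     {\<omega>\<in>space M. \<exists>K\<in>{K. finite K \<and> card K = m}. \<forall>i\<in>K. visits X (B \<inter> cell_index n -` {i}) \<omega>}"
    by (auto simp: visits_cells_def)
  also have "\<dots> \<in> events"
    using assms by (intro sets.sets_Collect_countable_Ex' sets.sets_Collect_countable_Ball visits_events sets.Int
      vimage_cell_index_borel countable_subset[OF _ countable_Collect_finite]) auto
  finally show ?thesis .
qed

lemma card_le_if_visits_cells:
  assumes "visits_cells n B m \<omega>" and fin: "finite (process_values X \<omega> \<inter> B)"
  shows "m \<le> card (process_values X \<omega> \<inter> B)"
proof -
  obtain K where K: "finite K" "card K = m" "\<forall>i\<in>K. visits X (B \<inter> cell_index n -` {i}) \<omega>"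
    using assms(1) by (auto simp: visits_cells_def)
  then have "K \<subseteq> cell_index n ` (process_values X \<omega> \<inter> B)"
    by (force simp: visits_def process_values_def)
  then have "m \<le> card (cell_index n ` (process_values X \<omega> \<inter> B))"
    using K(2) fin by (metis card_mono finite_imageI)
  also have "\<dots> \<le> card (process_values X \<omega> \<inter> B)"
    using fin by (rule card_image_le)
  finally show ?thesis .
qed

lemma visits_cells_if_inj_on:
  assumes "F \<subseteq> process_values X \<omega> \<inter> B" "finite F" "inj_on (cell_index n) F"
  shows "visits_cells n B (card F) \<omega>"
  unfolding visits_cells_def
proof (intro exI conjI)
  show "finite (cell_index n ` F)" using assms(2) by simp
  show "card (cell_index n ` F) = card F" using assms(3) by (rule card_image)
  show "\<forall>i\<in>cell_index n ` F. visits X (B \<inter> cell_index n -` {i}) \<omega>"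
    using assms(1) by (force simp: visits_def process_values_def)
qed

lemma eventually_visits_cells:
  assumes "infinite (process_values X \<omega> \<inter> B)"
  shows "eventually (\<lambda>n. visits_cells n B m \<omega>) sequentially"
proof -
  obtain F where F: "F \<subseteq> process_values X \<omega> \<inter> B" "finite F" "card F = m"
    using infinite_arbitrarily_large[OF assms] by blast
  from eventually_inj_on_cell_index[OF F(2)] show ?thesis
    by (rule eventually_mono) (use visits_cells_if_inj_on[OF F(1,2)] F(3) in blast)
qed

lemma infinite_values_iff_visits_cells:
  "infinite (process_values X \<omega> \<inter> B) \<longleftrightarrow> (\<forall>m. \<exists>n. visits_cells n B m \<omega>)"
proof
  assume "infinite (process_values X \<omega> \<inter> B)"
  then show "\<forall>m. \<exists>n. visits_cells n B m \<omega>"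
    by (metis eventually_visits_cells eventually_sequentially order.refl)
next
  assume "\<forall>m. \<exists>n. visits_cells n B m \<omega>"
  then obtain n where "visits_cells n B (Suc (card (process_values X \<omega> \<inter> B))) \<omega>" by blast
  then show "infinite (process_values X \<omega> \<inter> B)"
    using card_le_if_visits_cells by fastforce
qed

lemma infinite_values_events:
  "B \<in> sets borel \<Longrightarrow> {\<omega>\<in>space M. infinite (process_values X \<omega> \<inter> B)} \<in> events"
  unfolding infinite_values_iff_visits_cells
  by (intro sets.sets_Collect_countable_All sets.sets_Collect_countable_Ex visits_cells_events)

(* Some cell i0 < L holds infinitely many values in B; a selection of cells works as soon as it
   omits i0 and contains one of the m visited cells. *)
lemma bernoulli_selection_splits:
  fixes \<alpha> :: real
  assumes inf: "infinite (process_values X \<omega> \<inter> B)" and cells: "visits_cells n B m \<omega>"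
    and bounded: "\<forall>i. visits X (cell_index n -` {i}) \<omega> \<longrightarrow> i < L" and \<alpha>: "0 \<le> \<alpha>" "\<alpha> \<le> 1"
  shows "1 - \<alpha> - (1 - \<alpha>) ^ m \<le> measure_pmf.prob (Pi_pmf {..<L} False (\<lambda>_. bernoulli_pmf \<alpha>))
    {b. visits X (B \<inter> cell_index n -` {i. b i}) \<omega> \<and>
        infinite (process_values X \<omega> \<inter> (B - cell_index n -` {i. b i}))}"
proof -
  let ?V = "process_values X \<omega> \<inter> B"
  obtain K where K: "finite K" "card K = m" "\<forall>i\<in>K. visits X (B \<inter> cell_index n -` {i}) \<omega>"
    using cells by (auto simp: visits_cells_def)
  have K_L: "K \<subseteq> {..<L}"
    using K(3) bounded by (auto simp: visits_def)
  have cover: "?V \<subseteq> (\<Union>i<L. ?V \<inter> cell_index n -` {i})"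
  proof
    fix x assume x: "x \<in> ?V"
    then have "visits X (cell_index n -` {cell_index n x}) \<omega>"
      by (auto simp: visits_def process_values_def)
    with bounded x show "x \<in> (\<Union>i<L. ?V \<inter> cell_index n -` {i})" by blast
  qed
  have "\<not> (\<forall>i<L. finite (?V \<inter> cell_index n -` {i}))"
  proof
    assume "\<forall>i<L. finite (?V \<inter> cell_index n -` {i})"
    then have "finite (\<Union>i<L. ?V \<inter> cell_index n -` {i})" by blast
    with cover inf show False using finite_subset by blast
  qed
  then obtain i0 where i0: "i0 < L" "infinite (?V \<inter> cell_index n -` {i0})" by blast
  let ?\<nu> = "Pi_pmf {..<L} False (\<lambda>_. bernoulli_pmf \<alpha>)"
  have "{b. \<not> b i0 \<and> (\<exists>i\<in>K. b i)} \<subseteq>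
    {b. visits X (B \<inter> cell_index n -` {i. b i}) \<omega> \<and>
        infinite (process_values X \<omega> \<inter> (B - cell_index n -` {i. b i}))}"
  proof safe
    fix b i assume b: "\<not> b i0" "i \<in> K" "b i"
    show "visits X (B \<inter> cell_index n -` {i. b i}) \<omega>"
      using K(3) b(2,3) by (force simp: visits_def)
    have "?V \<inter> cell_index n -` {i0} \<subseteq> process_values X \<omega> \<inter> (B - cell_index n -` {i. b i})"
      using b(1) by auto
    moreover assume "finite (process_values X \<omega> \<inter> (B - cell_index n -` {i. b i}))"
    ultimately show False using i0(2) finite_subset by blast
  qed
  then have "measure_pmf.prob ?\<nu> {b. \<not> b i0 \<and> (\<exists>i\<in>K. b i)} \<le> measure_pmf.prob ?\<nu>
    {b. visits X (B \<inter> cell_index n -` {i. b i}) \<omega> \<and>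
        infinite (process_values X \<omega> \<inter> (B - cell_index n -` {i. b i}))}"
    by (rule measure_pmf.finite_measure_mono) simp
  then show ?thesis
    using prob_bernoulli_selection_avoids_and_meets[OF \<alpha> i0(1) K_L] unfolding K(2) by linarith
qed

lemma exists_level_visiting_many_cells:
  assumes B: "B \<in> sets borel" and "0 < \<epsilon>"
  shows "\<exists>n. prob {\<omega>\<in>space M. infinite (process_values X \<omega> \<inter> B)} - \<epsilon>
    < prob {\<omega>\<in>space M. infinite (process_values X \<omega> \<inter> B) \<and> visits_cells n B m \<omega>}"
proof -
  define S where "S N = {\<omega>\<in>space M. infinite (process_values X \<omega> \<inter> B) \<and> (\<forall>n\<ge>N. visits_cells n B m \<omega>)}" for N
  have "S N \<in> events" for N
    unfolding S_def using B
    by (intro sets.sets_Collect_conj sets.sets_Collect_countable_All sets.sets_Collect_imp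
        infinite_values_events visits_cells_events sets.sets_Collect_const)
  moreover have "incseq S" by (auto simp: incseq_def S_def)
  moreover have "(\<Union>N. S N) = {\<omega>\<in>space M. infinite (process_values X \<omega> \<inter> B)}"
    using eventually_visits_cells by (auto simp: S_def eventually_sequentially)
  ultimately obtain N where "prob {\<omega>\<in>space M. infinite (process_values X \<omega> \<inter> B)} - \<epsilon> < prob (S N)"
    using exists_prob_gt_of_incseq \<open>0 < \<epsilon>\<close> by fastforce
  also have "prob (S N) \<le> prob {\<omega>\<in>space M. infinite (process_values X \<omega> \<inter> B) \<and> visits_cells N B m \<omega>}"
    using B by (intro finite_measure_mono sets.sets_Collect_conj infinite_values_events visits_cells_events)
      (auto simp: S_def)
  finally show ?thesis by blast
qed

lemma exists_bound_on_visited_cells: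
  assumes fmv: "FMV M X" and "0 < \<epsilon>"
  shows "\<exists>L. 1 - \<epsilon> < prob {\<omega>\<in>space M. \<forall>i. visits X (cell_index n -` {i}) \<omega> \<longrightarrow> i < L}"
proof -
  define T where "T L = {\<omega>\<in>space M. \<forall>i. visits X (cell_index n -` {i}) \<omega> \<longrightarrow> i < L}" for L
  have T: "T L \<in> events" for L
    unfolding T_def
    by (intro sets.sets_Collect_countable_All sets.sets_Collect_imp visits_events vimage_cell_index_borel sets.sets_Collect_const)
  have "AE \<omega> in M. finite {i. visits X (cell_index n -` {i}) \<omega>}"
    using fmv vimage_cell_index_borel by (rule AE_finite_visits_if_FMV) (auto simp: disjoint_family_on_def)
  then have "AE \<omega> in M. \<omega> \<in> (\<Union>L. T L)"
    by (auto simp: T_def finite_nat_set_iff_bounded elim!: eventually_mono)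
  then have "prob (\<Union>L. T L) = 1"
    using T by (subst AE_in_set_eq_1[symmetric]) auto
  moreover have "incseq T" by (auto simp: incseq_def T_def)
  ultimately show ?thesis
    unfolding T_def[symmetric] using exists_prob_gt_of_incseq[OF T] \<open>0 < \<epsilon>\<close> by simp
qed

lemma exists_cell_selection:
  fixes \<alpha> :: real
  assumes B: "B \<in> sets borel" and \<alpha>: "0 \<le> \<alpha>" "\<alpha> \<le> 1" and G: "G \<in> events"
    and G_sub: "\<And>\<omega>. \<omega> \<in> G \<Longrightarrow> infinite (process_values X \<omega> \<inter> B) \<and> visits_cells n B m \<omega> \<and>
      (\<forall>i. visits X (cell_index n -` {i}) \<omega> \<longrightarrow> i < L)"
  shows "\<exists>I. (1 - \<alpha> - (1 - \<alpha>) ^ m) * prob G \<le> prob {\<omega>\<in>space M.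
    visits X (B \<inter> cell_index n -` I) \<omega> \<and> infinite (process_values X \<omega> \<inter> (B - cell_index n -` I))}"
proof -
  define E where "E b = {\<omega>\<in>space M. visits X (B \<inter> cell_index n -` {i. b i}) \<omega> \<and>
    infinite (process_values X \<omega> \<inter> (B - cell_index n -` {i. b i}))}" for b
  have "\<exists>b. (1 - \<alpha> - (1 - \<alpha>) ^ m) * prob G \<le> prob (E b)"
  proof (rule exists_good_choice_by_averaging[OF finite_set_Pi_pmf_bool])
    show "E b \<in> events" for b
      unfolding E_def using B
      by (intro sets.sets_Collect_conj visits_events infinite_values_events sets.Diff sets.Int vimage_cell_index_borel)
    show "G \<in> events" by (fact G)
    fix \<omega> assume "\<omega> \<in> G"
    then have "\<omega> \<in> space M" using sets.sets_into_space[OF G] by blast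
    then have "{b. \<omega> \<in> E b} = {b. visits X (B \<inter> cell_index n -` {i. b i}) \<omega> \<and>
      infinite (process_values X \<omega> \<inter> (B - cell_index n -` {i. b i}))}"
      unfolding E_def by blast
    moreover from G_sub[OF \<open>\<omega> \<in> G\<close>]
    have "infinite (process_values X \<omega> \<inter> B)" "visits_cells n B m \<omega>"
      "\<forall>i. visits X (cell_index n -` {i}) \<omega> \<longrightarrow> i < L" by auto
    note bernoulli_selection_splits[OF this \<alpha>]
    ultimately show "1 - \<alpha> - (1 - \<alpha>) ^ m \<le> measure_pmf.prob (Pi_pmf {..<L} False (\<lambda>_. bernoulli_pmf \<alpha>)) {b. \<omega> \<in> E b}"
      by (simp only:)
  qed
  then obtain b where "(1 - \<alpha> - (1 - \<alpha>) ^ m) * prob G \<le> prob (E b)" ..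
  then show ?thesis unfolding E_def by (rule exI[of _ "{i. b i}"])
qed

lemma split_off_visited_subset:
  assumes fmv: "FMV M X" and B: "B \<in> sets borel" and "0 < \<delta>"
  shows "\<exists>A\<in>sets borel. A \<subseteq> B \<and>
    prob {\<omega>\<in>space M. infinite (process_values X \<omega> \<inter> B)} - \<delta>
      \<le> prob {\<omega>\<in>space M. visits X A \<omega> \<and> infinite (process_values X \<omega> \<inter> (B - A))}"
proof (cases "\<delta> \<le> 1")
  case False
  have "prob {\<omega>\<in>space M. infinite (process_values X \<omega> \<inter> B)} - \<delta> \<le> 0"
    using prob_le_1[of "{\<omega>\<in>space M. infinite (process_values X \<omega> \<inter> B)}"] False by linarith
  then show ?thesis by (intro bexI[of _ "{}"]) (auto intro: order_trans[OF _ measure_nonneg])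
next
  case True
  define p where "p = prob {\<omega>\<in>space M. infinite (process_values X \<omega> \<inter> B)}"
  define \<alpha> where "\<alpha> = \<delta> / 4"
  have \<alpha>: "0 \<le> \<alpha>" "\<alpha> \<le> 1" using \<open>0 < \<delta>\<close> True by (auto simp: \<alpha>_def)
  have "(\<lambda>m. (1 - \<alpha>) ^ m) \<longlonglongrightarrow> 0"
    using \<open>0 < \<delta>\<close> \<alpha> by (intro LIMSEQ_power_zero) (auto simp: \<alpha>_def)
  from order_tendstoD(2)[OF this, of "\<delta> / 4"] \<open>0 < \<delta>\<close>
  obtain m where m: "(1 - \<alpha>) ^ m < \<delta> / 4" by (auto simp: eventually_sequentially)
  define S where "S n = {\<omega>\<in>space M. infinite (process_values X \<omega> \<inter> B) \<and> visits_cells n B m \<omega>}" for n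
  obtain n where n: "p - \<delta> / 4 < prob (S n)"
    using exists_level_visiting_many_cells[OF B, of "\<delta> / 4" m] \<open>0 < \<delta>\<close> by (auto simp: p_def S_def)
  define T where "T L = {\<omega>\<in>space M. \<forall>i. visits X (cell_index n -` {i}) \<omega> \<longrightarrow> i < L}" for L
  obtain L where L: "1 - \<delta> / 4 < prob (T L)"
    using exists_bound_on_visited_cells[OF fmv, of "\<delta> / 4" n] \<open>0 < \<delta>\<close> by (auto simp: T_def)
  have S_events: "S n \<in> events"
    using B unfolding S_def by (intro sets.sets_Collect_conj infinite_values_events visits_cells_events)
  have T_events: "T L \<in> events"
    unfolding T_def
    by (intro sets.sets_Collect_countable_All sets.sets_Collect_imp visits_events vimage_cell_index_borel sets.sets_Collect_const)
  have G_large: "p - \<delta> / 2 \<le> prob (S n \<inter> T L)"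
    using prob_Int_ge[OF S_events T_events] n L by simp
  have "infinite (process_values X \<omega> \<inter> B) \<and> visits_cells n B m \<omega> \<and>
    (\<forall>i. visits X (cell_index n -` {i}) \<omega> \<longrightarrow> i < L)" if "\<omega> \<in> S n \<inter> T L" for \<omega>
    using that by (simp add: S_def T_def)
  from exists_cell_selection[OF B \<alpha> sets.Int[OF S_events T_events] this]
  obtain I where I: "(1 - \<alpha> - (1 - \<alpha>) ^ m) * prob (S n \<inter> T L) \<le> prob {\<omega>\<in>space M.
    visits X (B \<inter> cell_index n -` I) \<omega> \<and> infinite (process_values X \<omega> \<inter> (B - cell_index n -` I))}" ..
  have "p \<le> 1" unfolding p_def by (rule prob_le_1)
  then have "p - \<delta> \<le> (1 - \<delta> / 2) * (p - \<delta> / 2)"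
    using diff_double_le_mult_diff[of "\<delta> / 2" p] \<open>0 < \<delta>\<close> by simp
  also have "\<dots> \<le> (1 - \<delta> / 2) * prob (S n \<inter> T L)"
    using G_large True by (intro mult_left_mono) auto
  also have "\<dots> \<le> (1 - \<alpha> - (1 - \<alpha>) ^ m) * prob (S n \<inter> T L)"
    using m by (intro mult_right_mono) (auto simp: \<alpha>_def)
  also note I
  finally have "p - \<delta> \<le> prob {\<omega>\<in>space M.
    visits X (B \<inter> cell_index n -` I) \<omega> \<and> infinite (process_values X \<omega> \<inter> (B - cell_index n -` I))}" .
  moreover have "B - (B \<inter> cell_index n -` I) = B - cell_index n -` I" by blast
  ultimately show ?thesis
    unfolding p_def using B vimage_cell_index_borel
    by (intro bexI[of _ "B \<inter> cell_index n -` I"] conjI sets.Int) (simp_all only: Int_lower1)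
qed

lemma disjoint_family_visited_with_positive_prob:
  assumes fmv: "FMV M X" and p: "0 < p" "p = prob {\<omega>\<in>space M. infinite (process_values X \<omega>)}"
  obtains A :: "nat \<Rightarrow> 'a set" where "\<And>k. A k \<in> sets borel" "disjoint_family A"
    "\<And>k. p / 2 \<le> prob {\<omega>\<in>space M. visits X (A k) \<omega>}"
proof -
  let ?inf = "\<lambda>R. prob {\<omega>\<in>space M. infinite (process_values X \<omega> \<inter> R)}"
  let ?split = "\<lambda>R A. prob {\<omega>\<in>space M. visits X A \<omega> \<and> infinite (process_values X \<omega> \<inter> (R - A))}"
  have step: "\<exists>A. A \<subseteq> R \<and> R - A \<in> sets borel \<and> A \<in> sets borel \<and> ?inf R - p / 2 ^ (k + 2) \<le> ?split R A"
    if "R \<in> sets borel" for R k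
  proof -
    have "0 < p / 2 ^ (k + 2)" using p(1) by simp
    from split_off_visited_subset[OF fmv that this] show ?thesis
      using that by (blast intro: sets.Diff)
  qed
  obtain R A :: "nat \<Rightarrow> 'a set" where R: "R 0 = UNIV" "\<And>k. R (Suc k) = R k - A k"
    "\<And>k. R k \<in> sets borel" "\<And>k. A k \<subseteq> R k"
    and A: "\<And>k. A k \<in> sets borel \<and> ?inf (R k) - p / 2 ^ (k + 2) \<le> ?split (R k) (A k)"
    by (rule peeling_sequence[where Q = "\<lambda>R. R \<in> sets borel" and S = UNIV
        and P = "\<lambda>k R A. A \<in> sets borel \<and> ?inf R - p / 2 ^ (k + 2) \<le> ?split R A"])
      (use step in auto)
  \<comment> \<open>the budgets p / 2 ^ (k + 2) add up to p / 2\<close>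
  have R_large: "p / 2 + p / 2 ^ (k + 1) \<le> ?inf (R k)" for k
  proof (induction k)
    case 0 then show ?case using p by (simp add: R(1))
  next
    case (Suc k)
    have "?split (R k) (A k) \<le> ?inf (R (Suc k))"
      by (intro finite_measure_mono infinite_values_events R(3)) (auto simp: R(2))
    moreover have "p / 2 + p / 2 ^ (k + 1) - p / 2 ^ (k + 2) = p / 2 + p / 2 ^ (Suc k + 1)"
      by (simp add: field_simps)
    ultimately show ?case using A[of k] Suc.IH by linarith
  qed
  show ?thesis
  proof (rule that)
    show "A k \<in> sets borel" for k using A by blast
    show "disjoint_family A"
      using R(4,2) by (rule disjoint_family_of_successive_removals)
    show "p / 2 \<le> prob {\<omega>\<in>space M. visits X (A k) \<omega>}" for k
    proof -
      have "?split (R k) (A k) \<le> prob {\<omega>\<in>space M. visits X (A k) \<omega>}"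
        using A by (intro finite_measure_mono visits_events) auto
      moreover have "p / 2 ^ (k + 2) \<le> p / 2 ^ (k + 1)"
        using p(1) by (simp add: field_simps)
      ultimately show ?thesis using A[of k] R_large[of k] by linarith
    qed
  qed
qed

lemma AE_finite_values_if_FMV:
  assumes fmv: "FMV M X"
  shows "AE \<omega> in M. finite (process_values X \<omega>)"
proof -
  define p where "p = prob {\<omega>\<in>space M. infinite (process_values X \<omega>)}"
  have events: "{\<omega>\<in>space M. infinite (process_values X \<omega>)} \<in> events"
    using infinite_values_events[of UNIV] by simp
  have "p \<le> 0"
  proof (rule ccontr)
    assume "\<not> p \<le> 0"
    then have "0 < p" by simp
    then obtain A :: "nat \<Rightarrow> 'a set" where A: "\<And>k. A k \<in> sets borel" "disjoint_family A"
      "\<And>k. p / 2 \<le> prob {\<omega>\<in>space M. visits X (A k) \<omega>}"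
      using disjoint_family_visited_with_positive_prob[OF fmv _ p_def] by blast
    have "AE \<omega> in M. finite {k. \<omega> \<in> {\<omega>\<in>space M. visits X (A k) \<omega>}}"
      using AE_finite_visits_if_FMV[OF fmv A(1,2)]
    proof (rule eventually_mono)
      fix \<omega> assume "finite {k. visits X (A k) \<omega>}"
      then show "finite {k. \<omega> \<in> {\<omega>\<in>space M. visits X (A k) \<omega>}}"
        by (rule finite_subset[rotated]) blast
    qed
    with visits_events[OF A(1)] A(3) have "p / 2 \<le> 0"
      by (rule nonpos_if_AE_finitely_often)
    with \<open>0 < p\<close> show False by simp
  qed
  then have "prob {\<omega>\<in>space M. infinite (process_values X \<omega>)} = 0"
    using measure_nonneg[of M] by (simp add: p_def order_antisym)
  then show ?thesis
    using prob_Collect_eq_0[OF events] by simp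
qed

end

theorem theorem5:
  fixes M :: "'b measure" and X :: "nat \<Rightarrow> 'b \<Rightarrow> 'a::metric_space"
  assumes "separable_space (euclidean :: 'a topology)"
    and "prob_space M"
    and "\<And>t. t \<ge> 1 \<Longrightarrow> X t \<in> borel_measurable M"
  shows "FMV M X \<longleftrightarrow> FS M X"
proof
  obtain q :: "nat \<Rightarrow> 'a" where "dense_sequence q"
    using assms(1) by (rule obtain_dense_sequence)
  then interpret separable_process M q X
    using assms(2,3) by (intro separable_process.intro separable_process_axioms.intro)
  show "FMV M X \<Longrightarrow> FS M X"
    unfolding FS_def using AE_finite_values_if_FMV by (simp add: process_values_def)
qed (rule FS_imp_FMV)

end
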